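(* Let $\{x_k\}_{k\in[n]}$ be unit vectors in $\mathbb{H}^d$ and let $S(x_k)=\{x_kzx_k^*:z\in\mathbb{H},\operatorname{Re}z=0\}$, a $3$-dimensional real subspace of the real vector space $\mathcal{A}_d$ of $d\times d$ quaternionic anti-Hermitian matrices (which has dimension $d(2d+1)$), equipped with $\langle A,B\rangle=\operatorname{Re}\operatorname{tr}(A^*B)$. (a) If $\{x_k\}_{k\in[n]}$ is equiangular, then $\{S(x_k)\}_{k\in[n]}$ is equi-isoclinic. (b) If $\{x_k\}_{k\in[n]}$ is a projective $2$-design for $\mathbb{H}^d$, then $\{S(x_k)\}_{k\in[n]}$ is a tight fusion frame for $\mathcal{A}_d$.
   Context: $\mathbb{H}$ is the quaternions; $x^*$ is conjugate transpose; unit means $x^*x=1$. On $\mathbb{H}^{d\times d}$ use the real inner product $\langle A,B\rangle=\operatorname{Re}\operatorname{tr}(A^*B)$. Unit vectors $\{x_k\}$ are equiangular if $|x_k^*x_\ell|^2$ takes the same value for all $k\neq\ell$. They form a projective $2$-design for $\mathbb{H}^d$ if $\frac{1}{n^2}\sum_{k,\ell}\langle x_kx_k^*,x_\ell x_\ell^*\rangle=\frac{1}{d}$ and $\frac{1}{n^2}\sum_{k,\ell}\langle x_kx_k^*,x_\ell x_\ell^*\rangle^2=\frac{3}{d(2d+1)}$. For $r$-dimensional subspaces $\{S_k\}_{k\in[n]}$ of a real inner product space $V$, choose orthonormal bases $\{y_{ki}\}_{i\in[r]}$ of $S_k$ and set $G_{k\ell}=[\langle y_{ki},y_{\ell j}\rangle]_{i,j\in[r]}$.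 The family is equi-isoclinic if there is $\alpha\ge0$ with $G_{k\ell}^*G_{k\ell}=\alpha I_r$ for all $k\ne\ell$; it is a tight fusion frame for $V$ if $\frac{1}{n^2}\sum_{k,\ell}\|G_{k\ell}\|_F^2=\frac{r^2}{\dim V}$. *)

theory Defs
  imports "HOL-Analysis.Analysis"
begin

datatype quat = Quat (Re_q: real) (Im_i: real) (Im_j: real) (Im_k: real)

lemma quat_eqI: "Re_q p = Re_q q \<Longrightarrow> Im_i p = Im_i q \<Longrightarrow> Im_j p = Im_j q \<Longrightarrow> Im_k p = Im_k q \<Longrightarrow> p = q"
  by (cases p, cases q) simp

instantiation quat :: ring_1
begin
definition "0 = Quat 0 0 0 0"
definition "1 = Quat 1 0 0 0"
definition "p + q = Quat (Re_q p + Re_q q) (Im_i p + Im_i q) (Im_j p + Im_j q) (Im_k p + Im_k q)"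
definition "p - q = Quat (Re_q p - Re_q q) (Im_i p - Im_i q) (Im_j p - Im_j q) (Im_k p - Im_k q)"
definition "- q = Quat (- Re_q q) (- Im_i q) (- Im_j q) (- Im_k q)"
definition "p * q = Quat
   (Re_q p * Re_q q - Im_i p * Im_i q - Im_j p * Im_j q - Im_k p * Im_k q)
   (Re_q p * Im_i q + Im_i p * Re_q q + Im_j p * Im_k q - Im_k p * Im_j q)
   (Re_q p * Im_j q - Im_i p * Im_k q + Im_j p * Re_q q + Im_k p * Im_i q)
   (Re_q p * Im_k q + Im_i p * Im_j q - Im_j p * Im_i q + Im_k p * Re_q q)"
instance
  by standard (auto intro!: quat_eqI simp: zero_quat_def one_quat_def plus_quat_def
      minus_quat_def uminus_quat_def times_quat_def algebra_simps)
end

instantiation quat :: real_vector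
begin
definition "scaleR r q = Quat (r * Re_q q) (r * Im_i q) (r * Im_j q) (r * Im_k q)"
instance
  by standard (auto intro!: quat_eqI simp: scaleR_quat_def plus_quat_def algebra_simps)
end

definition qcnj :: "quat \<Rightarrow> quat" where
  "qcnj q = Quat (Re_q q) (- Im_i q) (- Im_j q) (- Im_k q)"

definition qnorm2 :: "quat \<Rightarrow> real" where
  "qnorm2 q = (Re_q q)\<^sup>2 + (Im_i q)\<^sup>2 + (Im_j q)\<^sup>2 + (Im_k q)\<^sup>2"

definition hinner :: "quat^'d \<Rightarrow> quat^'d \<Rightarrow> quat" where
  "hinner x y = (\<Sum>i\<in>UNIV. qcnj (x $ i) * y $ i)"

definition unit_vec :: "quat^'d \<Rightarrow> bool" where
  "unit_vec x \<longleftrightarrow> hinner x x = 1"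

definition adj :: "quat^'d^'d \<Rightarrow> quat^'d^'d" where
  "adj A = (\<chi> i j. qcnj (A $ j $ i))"

definition mtrace :: "quat^'d^'d \<Rightarrow> quat" where
  "mtrace A = (\<Sum>i\<in>UNIV. A $ i $ i)"

definition minner :: "quat^'d^'d \<Rightarrow> quat^'d^'d \<Rightarrow> real" where
  "minner A B = Re_q (mtrace (adj A ** B))"

definition outer :: "quat^'d \<Rightarrow> quat \<Rightarrow> quat^'d \<Rightarrow> quat^'d^'d" where
  "outer x z y = (\<chi> i j. x $ i * z * qcnj (y $ j))"

definition proj :: "quat^'d \<Rightarrow> quat^'d^'d" where
  "proj x = outer x 1 x"

definition antiherm :: "(quat^'d^'d) set" where
  "antiherm = {A. adj A = - A}"

definition Ssub :: "quat^'d \<Rightarrow> (quat^'d^'d) set" where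
  "Ssub x = {outer x z x | z. Re_q z = 0}"

definition equiangular :: "nat \<Rightarrow> (nat \<Rightarrow> quat^'d) \<Rightarrow> bool" where
  "equiangular n x \<longleftrightarrow> (\<exists>c. \<forall>k<n. \<forall>l<n. k \<noteq> l \<longrightarrow> qnorm2 (hinner (x k) (x l)) = c)"

definition proj_2design :: "nat \<Rightarrow> (nat \<Rightarrow> quat^'d) \<Rightarrow> bool" where
  "proj_2design n x \<longleftrightarrow>
     (1 / (real n)\<^sup>2) * (\<Sum>k<n. \<Sum>l<n. minner (proj (x k)) (proj (x l))) = 1 / real CARD('d) \<and>
     (1 / (real n)\<^sup>2) * (\<Sum>k<n. \<Sum>l<n. (minner (proj (x k)) (proj (x l)))\<^sup>2)
        = 3 / (real CARD('d) * (2 * real CARD('d) + 1))"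

definition onb_family :: "('v::real_vector \<Rightarrow> 'v \<Rightarrow> real) \<Rightarrow> nat \<Rightarrow> nat \<Rightarrow> (nat \<Rightarrow> 'v set)
    \<Rightarrow> (nat \<Rightarrow> nat \<Rightarrow> 'v) \<Rightarrow> bool" where
  "onb_family ip r n S y \<longleftrightarrow> (\<forall>k<n.
      (\<forall>i<r. y k i \<in> S k) \<and>
      (\<forall>i<r. \<forall>j<r. ip (y k i) (y k j) = (if i = j then 1 else 0)) \<and>
      span {y k i | i. i < r} = S k)"

definition gram_blk :: "('v \<Rightarrow> 'v \<Rightarrow> real) \<Rightarrow> (nat \<Rightarrow> nat \<Rightarrow> 'v) \<Rightarrow> nat \<Rightarrow> nat \<Rightarrow> nat \<Rightarrow> nat \<Rightarrow> real" where
  "gram_blk ip y k l i j = ip (y k i) (y l j)"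

definition subspace_family :: "'v::real_vector set \<Rightarrow> nat \<Rightarrow> nat \<Rightarrow> (nat \<Rightarrow> 'v set) \<Rightarrow> bool" where
  "subspace_family V r n S \<longleftrightarrow> (\<forall>k<n. subspace (S k) \<and> S k \<subseteq> V \<and> dim (S k) = r)"

text \<open>Equi-isoclinic: for (any) choice of orthonormal bases, G_{kl}^* G_{kl} = \<alpha> I_r for k \<noteq> l.
  (The condition does not depend on the choice of bases.)\<close>
definition equi_isoclinic :: "'v::real_vector set \<Rightarrow> ('v \<Rightarrow> 'v \<Rightarrow> real) \<Rightarrow> nat \<Rightarrow> nat \<Rightarrow> (nat \<Rightarrow> 'v set) \<Rightarrow> bool" where
  "equi_isoclinic V ip r n S \<longleftrightarrow> subspace_family V r n S \<and>
     (\<forall>y. onb_family ip r n S y \<longrightarrow>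
        (\<exists>\<alpha>\<ge>0. \<forall>k<n. \<forall>l<n. k \<noteq> l \<longrightarrow>
           (\<forall>i<r. \<forall>j<r. (\<Sum>m<r. gram_blk ip y k l m i * gram_blk ip y k l m j)
                           = (if i = j then \<alpha> else 0))))"

definition tight_fusion_frame :: "'v::real_vector set \<Rightarrow> ('v \<Rightarrow> 'v \<Rightarrow> real) \<Rightarrow> nat \<Rightarrow> nat \<Rightarrow> (nat \<Rightarrow> 'v set) \<Rightarrow> bool" where
  "tight_fusion_frame V ip r n S \<longleftrightarrow> subspace_family V r n S \<and>
     (\<forall>y. onb_family ip r n S y \<longrightarrow>
        (1 / (real n)\<^sup>2) * (\<Sum>k<n. \<Sum>l<n. \<Sum>i<r. \<Sum>j<r. (gram_blk ip y k l i j)\<^sup>2)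
          = (real r)\<^sup>2 / real (dim V))"

end

theory Submission
  imports Defs
begin

text \<open>For a unit vector \<open>x\<close> the map \<open>z \<mapsto> x z x\<^sup>*\<close> is an isometry from the pure
  quaternions onto \<open>S(x)\<close>, and \<open>\<langle>x z x\<^sup>*, y w y\<^sup>*\<rangle> = \<langle>z, a w a\<^sup>*\<rangle>\<close> with \<open>a = x\<^sup>* y\<close>.
  Hence, in orthonormal bases, the Gram block \<open>G\<^sub>k\<^sub>l\<close> represents the conjugation
  \<open>w \<mapsto> a w a\<^sup>*\<close>, which is \<open>|a|\<^sup>2\<close> times a rotation of the pure quaternions; so
  \<open>G\<^sub>k\<^sub>l\<^sup>* G\<^sub>k\<^sub>l = |x\<^sub>k\<^sup>* x\<^sub>l|\<^sup>4 I\<^sub>3\<close>. Equiangularity makes this multiple constant.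
  For a 2-design, \<open>\<parallel>G\<^sub>k\<^sub>l\<parallel>\<^sub>F\<^sup>2 = 3 \<langle>x\<^sub>k x\<^sub>k\<^sup>*, x\<^sub>l x\<^sub>l\<^sup>*\<rangle>\<^sup>2\<close> averages to \<open>9 / (d(2d+1))\<close>, and
  \<open>dim \<A>\<^sub>d = d(2d+1)\<close> is read off an explicit orthogonal basis.\<close>

section \<open>Quaternions as a Euclidean space\<close>

lemma quat_components [simp]:
  "Re_q 0 = 0" "Im_i 0 = 0" "Im_j 0 = 0" "Im_k 0 = 0"
  "Re_q 1 = 1" "Im_i 1 = 0" "Im_j 1 = 0" "Im_k 1 = 0"
  "Re_q (p + q) = Re_q p + Re_q q" "Im_i (p + q) = Im_i p + Im_i q"
  "Im_j (p + q) = Im_j p + Im_j q" "Im_k (p + q) = Im_k p + Im_k q"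
  "Re_q (p - q) = Re_q p - Re_q q" "Im_i (p - q) = Im_i p - Im_i q"
  "Im_j (p - q) = Im_j p - Im_j q" "Im_k (p - q) = Im_k p - Im_k q"
  "Re_q (- q) = - Re_q q" "Im_i (- q) = - Im_i q" "Im_j (- q) = - Im_j q" "Im_k (- q) = - Im_k q"
  "Re_q (r *\<^sub>R q) = r * Re_q q" "Im_i (r *\<^sub>R q) = r * Im_i q"
  "Im_j (r *\<^sub>R q) = r * Im_j q" "Im_k (r *\<^sub>R q) = r * Im_k q"
  "Re_q (qcnj q) = Re_q q" "Im_i (qcnj q) = - Im_i q" "Im_j (qcnj q) = - Im_j q" "Im_k (qcnj q) = - Im_k q"
  by (simp_all add: zero_quat_def one_quat_def plus_quat_def minus_quat_def uminus_quat_def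
      scaleR_quat_def qcnj_def)

lemma quat_mult_components:
  "Re_q (p * q) = Re_q p * Re_q q - Im_i p * Im_i q - Im_j p * Im_j q - Im_k p * Im_k q"
  "Im_i (p * q) = Re_q p * Im_i q + Im_i p * Re_q q + Im_j p * Im_k q - Im_k p * Im_j q"
  "Im_j (p * q) = Re_q p * Im_j q - Im_i p * Im_k q + Im_j p * Re_q q + Im_k p * Im_i q"
  "Im_k (p * q) = Re_q p * Im_k q + Im_i p * Im_j q - Im_j p * Im_i q + Im_k p * Re_q q"
  by (simp_all add: times_quat_def)

lemma quat_eq_iff:
  "p = q \<longleftrightarrow> Re_q p = Re_q q \<and> Im_i p = Im_i q \<and> Im_j p = Im_j q \<and> Im_k p = Im_k q"
  using quat_eqI by blast

lemma Re_q_sum: "Re_q (sum f A) = (\<Sum>a\<in>A. Re_q (f a))"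
  by (induction A rule: infinite_finite_induct) auto

lemma Re_q_mult_commute: "Re_q (p * q) = Re_q (q * p)"
  by (simp add: quat_mult_components algebra_simps)

lemma quat_scaleR_mult_left: "(r *\<^sub>R p) * (q :: quat) = r *\<^sub>R (p * q)"
  and quat_scaleR_mult_right: "(p :: quat) * (r *\<^sub>R q) = r *\<^sub>R (p * q)"
  by (simp_all add: quat_eq_iff quat_mult_components algebra_simps)

lemma qcnj_qcnj [simp]: "qcnj (qcnj p) = p"
  and qcnj_zero [simp]: "qcnj 0 = 0"
  and qcnj_one [simp]: "qcnj 1 = 1"
  and qcnj_add: "qcnj (p + q) = qcnj p + qcnj q"
  and qcnj_diff: "qcnj (p - q) = qcnj p - qcnj q"
  and qcnj_scaleR: "qcnj (r *\<^sub>R p) = r *\<^sub>R qcnj p"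
  and qcnj_mult: "qcnj (p * q) = qcnj q * qcnj p"
  by (simp_all add: quat_eq_iff quat_mult_components algebra_simps)

lemma qcnj_eq_0_iff [simp]: "qcnj p = 0 \<longleftrightarrow> p = 0"
  by (metis qcnj_qcnj qcnj_zero)

lemma qcnj_sum: "qcnj (sum f A) = (\<Sum>a\<in>A. qcnj (f a))"
  by (induction A rule: infinite_finite_induct) (simp_all add: qcnj_add)

lemma qcnj_mult_self: "qcnj p * p = qnorm2 p *\<^sub>R 1"
  by (rule quat_eqI) (simp_all add: quat_mult_components qnorm2_def power2_eq_square)

lemma mult_qcnj_self: "p * qcnj p = qnorm2 p *\<^sub>R 1"
  by (rule quat_eqI) (simp_all add: quat_mult_components qnorm2_def power2_eq_square)

instantiation quat :: real_inner
begin

definition inner_quat_def: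
  "p \<bullet> q = Re_q p * Re_q q + Im_i p * Im_i q + Im_j p * Im_j q + Im_k p * Im_k q"

definition norm_quat_def: "norm q = sqrt (qnorm2 q)"

definition sgn_quat_def: "sgn (q :: quat) = q /\<^sub>R norm q"

definition dist_quat_def: "dist (p :: quat) q = norm (p - q)"

definition uniformity_quat_def [code del]:
  "(uniformity :: (quat \<times> quat) filter) = (INF e\<in>{0 <..}. principal {(x, y). dist x y < e})"

definition open_quat_def [code del]:
  "open (U :: quat set) \<longleftrightarrow> (\<forall>x\<in>U. eventually (\<lambda>(x', y). x' = x \<longrightarrow> y \<in> U) uniformity)"

instance
proof
  fix r :: real and p q s :: quat
  show "p \<bullet> q = q \<bullet> p" "(p + q) \<bullet> s = p \<bullet> s + q \<bullet> s" "(r *\<^sub>R p) \<bullet> q = r * (p \<bullet> q)"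
    "0 \<le> p \<bullet> p" "norm p = sqrt (p \<bullet> p)"
    by (simp_all add: inner_quat_def norm_quat_def qnorm2_def power2_eq_square algebra_simps)
  show "p \<bullet> p = 0 \<longleftrightarrow> p = 0"
    by (auto simp: inner_quat_def quat_eq_iff sum_squares_eq_zero_iff add_nonneg_eq_0_iff)
qed (rule sgn_quat_def dist_quat_def open_quat_def uniformity_quat_def)+

end

definition qi :: quat where "qi = Quat 0 1 0 0"
definition qj :: quat where "qj = Quat 0 0 1 0"
definition qk :: quat where "qk = Quat 0 0 0 1"

lemma quat_units_distinct: "1 \<noteq> qi" "1 \<noteq> qj" "1 \<noteq> qk" "qi \<noteq> qj" "qi \<noteq> qk" "qj \<noteq> qk"
  by (simp_all add: qi_def qj_def qk_def quat_eq_iff)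

lemma inner_quat_units:
  "(1::quat) \<bullet> 1 = 1" "qi \<bullet> qi = 1" "qj \<bullet> qj = 1" "qk \<bullet> qk = 1"
  "1 \<bullet> qi = 0" "1 \<bullet> qj = 0" "1 \<bullet> qk = 0" "qi \<bullet> qj = 0" "qi \<bullet> qk = 0" "qj \<bullet> qk = 0"
  "qi \<bullet> 1 = 0" "qj \<bullet> 1 = 0" "qk \<bullet> 1 = 0" "qj \<bullet> qi = 0" "qk \<bullet> qi = 0" "qk \<bullet> qj = 0"
  by (simp_all add: inner_quat_def qi_def qj_def qk_def)

instantiation quat :: euclidean_space
begin

definition Basis_quat_def: "Basis = {1, qi, qj, qk}"

instance
proof
  fix p u v :: quat
  show "(Basis :: quat set) \<noteq> {}" "finite (Basis :: quat set)"
    by (simp_all add: Basis_quat_def)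
  show "u \<in> Basis \<Longrightarrow> v \<in> Basis \<Longrightarrow> u \<bullet> v = (if u = v then 1 else 0)"
    using quat_units_distinct unfolding Basis_quat_def by (auto simp: inner_quat_units)
  show "(\<forall>u\<in>Basis. p \<bullet> u = 0) \<longleftrightarrow> p = 0"
    by (simp add: Basis_quat_def) (simp add: inner_quat_def qi_def qj_def qk_def quat_eq_iff)
qed

end

lemma DIM_quat [simp]: "DIM(quat) = 4"
  using quat_units_distinct by (simp add: Basis_quat_def)

lemma one_in_Basis_quat: "(1 :: quat) \<in> Basis"
  by (simp add: Basis_quat_def)

lemma inner_quat_Re: "p \<bullet> q = Re_q (qcnj p * q)"
  by (simp add: inner_quat_def quat_mult_components)

lemma inner_quat_one_left [simp]: "1 \<bullet> q = Re_q q"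
  by (simp add: inner_quat_def)

lemma Re_q_Basis: "u \<in> Basis \<Longrightarrow> u \<noteq> 1 \<Longrightarrow> Re_q u = 0"
  using inner_Basis[of 1 u] by (simp add: Basis_quat_def)

lemma inner_qcnj [simp]: "qcnj p \<bullet> qcnj q = p \<bullet> q"
  by (simp add: inner_quat_def)

lemma qcnj_pure: "Re_q z = 0 \<Longrightarrow> qcnj z = - z"
  by (simp add: quat_eq_iff)

lemma Re_q_sandwich: "Re_q (a * w * qcnj a) = qnorm2 a * Re_q w"
proof -
  have "Re_q (a * w * qcnj a) = Re_q ((qcnj a * a) * w)"
    by (metis Re_q_mult_commute mult.assoc)
  then show ?thesis by (simp add: qcnj_mult_self quat_scaleR_mult_left)
qed

lemma inner_sandwich: "(a * w * qcnj a) \<bullet> (a * v * qcnj a) = (qnorm2 a)\<^sup>2 * (w \<bullet> v)"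
proof -
  have "qcnj (a * w * qcnj a) * (a * v * qcnj a) = a * qcnj w * (qcnj a * a) * v * qcnj a"
    by (simp add: qcnj_mult mult.assoc)
  also have "\<dots> = qnorm2 a *\<^sub>R (a * (qcnj w * v) * qcnj a)"
    by (simp add: qcnj_mult_self quat_scaleR_mult_left quat_scaleR_mult_right mult.assoc)
  finally show ?thesis
    by (simp add: inner_quat_Re Re_q_sandwich power2_eq_square)
qed

section \<open>Orthogonal families\<close>

lemma dim_eq_card_orthogonal_complete:
  fixes W B :: "'a::euclidean_space set"
  assumes "subspace W" "B \<subseteq> W" "pairwise orthogonal B" "0 \<notin> B"
    and complete: "\<And>A. A \<in> W \<Longrightarrow> (\<And>b. b \<in> B \<Longrightarrow> orthogonal b A) \<Longrightarrow> A = 0"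
  shows "dim W = card B"
proof -
  have "W \<subseteq> span B"
  proof
    fix A assume "A \<in> W"
    obtain y z where y: "y \<in> span B" and z: "\<And>w. w \<in> span B \<Longrightarrow> orthogonal z w" and "A = y + z"
      using orthogonal_subspace_decomp_exists[of B A] by blast
    have "span B \<subseteq> W"
      using assms(1,2) by (simp add: span_minimal)
    then have "z \<in> W"
      using \<open>A \<in> W\<close> \<open>A = y + z\<close> y assms(1) by (metis add_diff_cancel_left' subsetD subspace_diff)
    then have "z = 0"
      using complete z by (meson orthogonal_commute span_base)
    then show "A \<in> span B"
      using \<open>A = y + z\<close> y by simp
  qed
  then have "span B = W"
    using assms(1,2) by (simp add: span_minimal subset_antisym)
  then show ?thesis
    using pairwise_orthogonal_independent[OF assms(3,4)] by (metis dim_eq_card_independent dim_span)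
qed

lemma onb_family_expansion:
  fixes S :: "nat \<Rightarrow> 'v::real_inner set"
  assumes onb: "onb_family (\<bullet>) r n S y" and "k < n" and "A \<in> S k"
  shows "A = (\<Sum>m<r. (y k m \<bullet> A) *\<^sub>R y k m)"
proof -
  have orth: "\<And>i j. i < r \<Longrightarrow> j < r \<Longrightarrow> y k i \<bullet> y k j = (if i = j then 1 else 0)"
    and span: "span (y k ` {..<r}) = S k"
    using onb \<open>k < n\<close> unfolding onb_family_def by (auto simp: setcompr_eq_image lessThan_def)
  have inj: "inj_on (y k) {..<r}"
    using orth by (intro inj_onI) (metis lessThan_iff zero_neq_one)
  obtain c where A: "A = (\<Sum>m<r. c m *\<^sub>R y k m)"
    using \<open>A \<in> S k\<close> span_finite[of "y k ` {..<r}"] span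
    by (auto simp: sum.reindex[OF inj])
  have "y k j \<bullet> A = c j" if "j < r" for j
  proof -
    have "y k j \<bullet> A = (\<Sum>m<r. c m * (y k j \<bullet> y k m))"
      by (simp add: A inner_sum_right)
    also have "\<dots> = (\<Sum>m<r. if m = j then c j else 0)"
      using orth that by (intro sum.cong) auto
    finally show ?thesis
      using that by simp
  qed
  then show ?thesis
    by (simp add: A)
qed

lemma onb_family_parseval:
  fixes S :: "nat \<Rightarrow> 'v::real_inner set"
  assumes "onb_family (\<bullet>) r n S y" and "k < n" and "A \<in> S k"
  shows "A \<bullet> B = (\<Sum>m<r. (y k m \<bullet> A) * (y k m \<bullet> B))"
  by (subst onb_family_expansion[OF assms]) (simp add: inner_sum_left)

section \<open>Quaternionic matrices and the subspaces \<open>S(x)\<close>\<close>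

lemma minner_eq_inner: "minner = (\<bullet>)"
proof (intro ext)
  fix A B :: "quat^'d^'d"
  have "minner A B = (\<Sum>i\<in>UNIV. \<Sum>j\<in>UNIV. A$j$i \<bullet> B$j$i)"
    by (simp add: minner_def mtrace_def adj_def matrix_matrix_mult_def Re_q_sum inner_quat_Re)
  also have "\<dots> = A \<bullet> B"
    by (subst sum.swap) (simp add: inner_vec_def)
  finally show "minner A B = A \<bullet> B" .
qed

lemma outer_nth [simp]: "outer x z y $ i $ j = x$i * z * qcnj (y$j)"
  by (simp add: outer_def)

lemma linear_outer: "linear (\<lambda>z. outer x z y)"
  by (rule linearI)
    (simp_all add: vec_eq_iff distrib_left distrib_right quat_scaleR_mult_left quat_scaleR_mult_right)

lemma hinner_swap: "hinner y x = qcnj (hinner x y)"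
  by (simp add: hinner_def qcnj_sum qcnj_mult)

lemma inner_outer:
  "outer x z x \<bullet> outer y w y = z \<bullet> (hinner x y * w * qcnj (hinner x y))"
proof -
  have entry: "(x$i * z * qcnj (x$j)) \<bullet> (y$i * w * qcnj (y$j))
      = Re_q (qcnj z * (qcnj (x$i) * y$i) * w * (qcnj (y$j) * x$j))" for i j
  proof -
    have "(x$i * z * qcnj (x$j)) \<bullet> (y$i * w * qcnj (y$j))
        = Re_q ((x$j * qcnj z * qcnj (x$i) * y$i * w) * qcnj (y$j))"
      by (simp add: inner_quat_Re qcnj_mult mult.assoc)
    also have "\<dots> = Re_q (qcnj (y$j) * (x$j * (qcnj z * (qcnj (x$i) * y$i) * w)))"
      by (subst Re_q_mult_commute) (simp add: mult.assoc)
    also have "\<dots> = Re_q ((qcnj z * (qcnj (x$i) * y$i) * w) * (qcnj (y$j) * x$j))"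
      by (subst Re_q_mult_commute) (simp add: mult.assoc)
    finally show ?thesis .
  qed
  have "outer x z x \<bullet> outer y w y
      = (\<Sum>i\<in>UNIV. \<Sum>j\<in>UNIV. Re_q (qcnj z * (qcnj (x$i) * y$i) * w * (qcnj (y$j) * x$j)))"
    by (simp add: inner_vec_def entry)
  also have "\<dots> = Re_q (qcnj z * hinner x y * w * hinner y x)"
    by (simp add: Re_q_sum hinner_def sum_distrib_left sum_distrib_right) (rule sum.swap)
  finally show ?thesis
    by (simp add: inner_quat_Re hinner_swap[of y x] mult.assoc)
qed

lemma inner_outer_unit: "unit_vec x \<Longrightarrow> outer x z x \<bullet> outer x w x = z \<bullet> w"
  by (simp add: inner_outer unit_vec_def)

lemma inj_outer_unit:
  assumes "unit_vec x"
  shows "inj (\<lambda>z. outer x z x)"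
proof (rule injI)
  fix z w assume "outer x z x = outer x w x"
  then have "outer x (z - w) x = 0"
    using linear_diff[OF linear_outer] by (metis diff_self)
  then have "(z - w) \<bullet> (z - w) = 0"
    using inner_outer_unit[OF assms, of "z - w" "z - w"] by simp
  then show "z = w" by simp
qed

lemma Ssub_eq_image: "Ssub x = (\<lambda>z. outer x z x) ` {z. orthogonal 1 z}"
  by (auto simp: Ssub_def orthogonal_def)

lemma subspace_Ssub: "subspace (Ssub x)"
  unfolding Ssub_eq_image
  by (rule linear_subspace_image[OF linear_outer subspace_orthogonal_to_vector])

lemma dim_Ssub:
  assumes "unit_vec x"
  shows "dim (Ssub x) = 3"
proof -
  have "dim (Ssub x) = dim {z :: quat. 1 \<bullet> z = 0}"
    unfolding Ssub_eq_image orthogonal_def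
    using inj_outer_unit[OF assms] by (metis dim_image_eq inj_on_subset linear_outer subset_UNIV)
  also have "\<dots> = 3"
    using dim_hyperplane[of "1 :: quat"] by simp
  finally show ?thesis .
qed

lemma adj_outer: "adj (outer x z x) = outer x (qcnj z) x"
  by (simp add: adj_def vec_eq_iff qcnj_mult mult.assoc)

lemma Ssub_antiherm: "Ssub x \<subseteq> antiherm"
  by (auto simp: Ssub_def antiherm_def adj_outer qcnj_pure linear_neg[OF linear_outer])

section \<open>The space of anti-Hermitian matrices\<close>

lemma axis_axis_nth: "axis a (axis b u) $ i $ j = (if i = a \<and> j = b then u else 0)"
  by (simp add: axis_def)

lemma antiherm_entry:
  assumes "A \<in> antiherm"
  shows "A$b$a = - qcnj (A$a$b)"
proof -
  have "adj A $ b $ a = (- A) $ b $ a"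
    using assms by (simp add: antiherm_def)
  then have "qcnj (A$a$b) = - A$b$a"
    by (simp add: adj_def)
  then show ?thesis
    by (metis minus_minus)
qed

lemma subspace_antiherm: "subspace antiherm"
  unfolding subspace_def antiherm_def by (simp add: adj_def vec_eq_iff qcnj_add qcnj_scaleR)

definition antiherm_unit :: "'d \<Rightarrow> 'd \<Rightarrow> quat \<Rightarrow> quat^'d^'d" where
  "antiherm_unit a b u = axis a (axis b u) - axis b (axis a (qcnj u))"

lemma antiherm_unit_nth:
  "antiherm_unit a b u $ i $ j = (if i = a \<and> j = b then u else 0) - (if i = b \<and> j = a then qcnj u else 0)"
  unfolding antiherm_unit_def by (simp add: axis_axis_nth)

lemma adj_axis_axis: "adj (axis a (axis b u)) = axis b (axis a (qcnj u))"
  by (simp add: adj_def vec_eq_iff axis_axis_nth)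

lemma adj_diff: "adj (A - B) = adj A - adj B"
  by (simp add: adj_def vec_eq_iff qcnj_diff)

lemma antiherm_unit_antiherm: "antiherm_unit a b u \<in> antiherm"
  by (simp add: antiherm_def antiherm_unit_def adj_diff adj_axis_axis)

lemma inner_antiherm_unit:
  assumes "A \<in> antiherm"
  shows "antiherm_unit a b u \<bullet> A = 2 * (u \<bullet> A$a$b)"
  using antiherm_entry[OF assms, of a b]
  by (simp add: antiherm_unit_def inner_diff_left inner_axis' flip: inner_qcnj[of u])

lemma inner_antiherm_units:
  "antiherm_unit a b u \<bullet> antiherm_unit a' b' u'
    = 2 * (u \<bullet> ((if a = a' \<and> b = b' then u' else 0) - (if a = b' \<and> b = a' then qcnj u' else 0)))"
  by (simp only: inner_antiherm_unit[OF antiherm_unit_antiherm] antiherm_unit_nth)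

text \<open>Each unordered pair of distinct indices is used once, in the order given by an injection
  \<open>h\<close> into \<open>nat\<close>; on the diagonal only pure imaginary units occur.\<close>

definition antiherm_index :: "('d \<Rightarrow> nat) \<Rightarrow> (('d \<times> 'd) \<times> quat) set" where
  "antiherm_index h = {(a, b). h a < h b} \<times> Basis \<union> range (\<lambda>a. (a, a)) \<times> (Basis - {1})"

lemma antiherm_index_cases:
  "((a, b), u) \<in> antiherm_index h \<Longrightarrow> u \<in> Basis \<and> (h a < h b \<or> a = b \<and> Re_q u = 0)"
  using Re_q_Basis by (auto simp: antiherm_index_def)

lemma inner_antiherm_units_index:
  assumes p: "((a, b), u) \<in> antiherm_index h" and p': "((a', b'), u') \<in> antiherm_index h"
    and ne: "((a, b), u) \<noteq> ((a', b'), u')"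
  shows "antiherm_unit a b u \<bullet> antiherm_unit a' b' u' = 0"
proof (cases "a = a' \<and> b = b'")
  case True
  then have "u \<noteq> u'"
    using ne by blast
  moreover have "u \<in> Basis" "u' \<in> Basis"
    using antiherm_index_cases[OF p] antiherm_index_cases[OF p'] by auto
  ultimately have "u \<bullet> u' = 0"
    by (simp add: inner_Basis)
  moreover have "qcnj u' = - u'" if "a = b"
    using antiherm_index_cases[OF p'] True that qcnj_pure[of u'] by auto
  ultimately show ?thesis
    using True by (cases "a = b") (simp_all add: inner_antiherm_units inner_diff_right)
next
  case False
  moreover have "\<not> (a = b' \<and> b = a')"
    using antiherm_index_cases[OF p] antiherm_index_cases[OF p'] False by auto
  ultimately show ?thesis
    unfolding inner_antiherm_units by (simp only: if_not_P) simp
qed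

lemma antiherm_unit_index_nonzero:
  assumes "((a, b), u) \<in> antiherm_index h"
  shows "antiherm_unit a b u \<noteq> 0"
proof -
  have "antiherm_unit a b u $ a $ b = u - (if a = b then qcnj u else 0)"
    by (simp add: antiherm_unit_nth)
  also have "\<dots> \<noteq> 0"
    using antiherm_index_cases[OF assms] nonzero_Basis[of u] by (auto simp: qcnj_pure quat_eq_iff)
  finally show ?thesis by auto
qed

lemma card_ordered_pairs:
  fixes h :: "'a::finite \<Rightarrow> nat"
  assumes "inj h"
  shows "2 * card {(a, b). h a < h b} + CARD('a) = CARD('a) * CARD('a)"
proof -
  define P where "P = {(a, b :: 'a). h a < h b}"
  define D where "D = range (\<lambda>a :: 'a. (a, a))"
  have U: "UNIV = P \<union> (prod.swap ` P \<union> D)"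
    using assms by (auto simp: P_def D_def image_iff inj_eq dest: linorder_neqE_nat)
  have "P \<inter> (prod.swap ` P \<union> D) = {}" "prod.swap ` P \<inter> D = {}"
    by (auto simp: P_def D_def)
  then have "CARD('a \<times> 'a) = card P + (card (prod.swap ` P) + card D)"
    unfolding U by (simp add: card_Un_disjoint)
  moreover have "card (prod.swap ` P) = card P" "card D = CARD('a)"
    by (simp_all add: D_def card_image[OF inj_swap] card_image inj_on_def)
  ultimately show ?thesis
    by (simp add: P_def card_cartesian_product)
qed

lemma card_antiherm_index:
  fixes h :: "'d::finite \<Rightarrow> nat"
  assumes "inj h"
  shows "card (antiherm_index h) = CARD('d) * (2 * CARD('d) + 1)"
proof -
  define P where "P = {(a, b :: 'd). h a < h b}"
  define D where "D = range (\<lambda>a :: 'd. (a, a))"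
  have "P \<inter> D = {}"
    by (auto simp: P_def D_def)
  then have "card (antiherm_index h) = card (P \<times> (Basis :: quat set)) + card (D \<times> (Basis - {1 :: quat}))"
    unfolding antiherm_index_def P_def D_def by (intro card_Un_disjoint) auto
  moreover have "card D = CARD('d)"
    by (simp add: D_def card_image inj_on_def)
  moreover have "card (Basis - {1 :: quat}) = 3"
    using card_Diff_singleton[OF one_in_Basis_quat] by simp
  ultimately show ?thesis
    using card_ordered_pairs[OF assms] by (simp add: P_def card_cartesian_product algebra_simps)
qed

lemma antiherm_eq_0I:
  fixes h :: "'d::finite \<Rightarrow> nat" and A :: "quat^'d^'d"
  assumes "inj h" and A: "A \<in> antiherm"
    and coords: "\<And>a b u. ((a, b), u) \<in> antiherm_index h \<Longrightarrow> u \<bullet> A$a$b = 0"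
  shows "A = 0"
proof -
  have upper: "A$a$b = 0" if "h a < h b" for a b
    using coords[of a b] that euclidean_all_zero_iff[of "A$a$b"]
    by (simp add: antiherm_index_def inner_commute)
  have "A$a$b = 0" for a b
  proof -
    consider "h a < h b" | "h b < h a" | "a = b"
      using \<open>inj h\<close> by (metis inj_eq linorder_neqE_nat)
    then show ?thesis
    proof cases
      case 1
      then show ?thesis by (rule upper)
    next
      case 2
      then show ?thesis using upper antiherm_entry[OF A, of b a] by simp
    next
      case 3
      have "Re_q (A$a$a) = - Re_q (A$a$a)"
        using arg_cong[OF antiherm_entry[OF A, of a a], of Re_q] by simp
      then have "1 \<bullet> A$a$a = 0"
        by simp
      moreover have "u \<bullet> A$a$a = 0" if "u \<in> Basis" "u \<noteq> 1" for u
        using coords[of a a u] that by (simp add: antiherm_index_def)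
      ultimately have "\<forall>u\<in>Basis. A$a$a \<bullet> u = 0"
        by (metis inner_commute)
      then show ?thesis using 3 euclidean_all_zero_iff by blast
    qed
  qed
  then show ?thesis by (simp add: vec_eq_iff)
qed

lemma dim_antiherm: "dim (antiherm :: (quat^'d^'d) set) = CARD('d) * (2 * CARD('d) + 1)"
proof -
  obtain h :: "'d \<Rightarrow> nat" where "inj h"
    using ex_bij_betw_finite_nat[of "UNIV :: 'd set"] bij_betw_imp_inj_on by blast
  define I where "I = antiherm_index h"
  define E where "E = (\<lambda>((a, b), u). antiherm_unit a b u :: quat^'d^'d)"
  have E_orth: "E p \<bullet> E p' = 0" if "p \<in> I" "p' \<in> I" "p \<noteq> p'" for p p'
    using that inner_antiherm_units_index unfolding I_def E_def by (metis case_prod_conv prod.collapse)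
  have E_nonzero: "E p \<noteq> 0" if "p \<in> I" for p
    using that antiherm_unit_index_nonzero unfolding I_def E_def by (metis case_prod_conv prod.collapse)
  have "dim (antiherm :: (quat^'d^'d) set) = card (E ` I)"
  proof (rule dim_eq_card_orthogonal_complete[OF subspace_antiherm])
    show "E ` I \<subseteq> antiherm"
      by (auto simp: E_def antiherm_unit_antiherm)
    show "pairwise orthogonal (E ` I)"
      using E_orth unfolding pairwise_def orthogonal_def by (metis imageE)
    show "0 \<notin> E ` I"
      using E_nonzero by auto
    show "A = 0" if A: "A \<in> antiherm" and orth: "\<And>B. B \<in> E ` I \<Longrightarrow> orthogonal B A" for A
    proof (rule antiherm_eq_0I[OF \<open>inj h\<close> A])
      fix a b u assume "((a, b), u) \<in> antiherm_index h"
      then have "orthogonal (E ((a, b), u)) A"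
        using orth unfolding I_def by blast
      then show "u \<bullet> A$a$b = 0"
        using inner_antiherm_unit[OF A, of a b u] by (simp add: E_def orthogonal_def)
    qed
  qed
  also have "\<dots> = card I"
    using E_orth E_nonzero by (intro card_image inj_onI) (metis inner_eq_zero_iff)
  finally show ?thesis
    using card_antiherm_index[OF \<open>inj h\<close>] by (simp add: I_def)
qed

section \<open>Gram blocks of the family \<open>S(x\<^sub>k)\<close>\<close>

lemma inner_outer_transport:
  assumes "unit_vec x"
  shows "outer x z x \<bullet> outer y w y
    = outer x z x \<bullet> outer x (hinner x y * w * qcnj (hinner x y)) x"
  unfolding inner_outer_unit[OF assms] by (rule inner_outer)

lemma Ssub_gram_product:
  assumes onb: "onb_family (\<bullet>) r n (\<lambda>k. Ssub (x k)) y"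
    and "k < n" "l < n" "unit_vec (x k)" "unit_vec (x l)"
    and B: "B \<in> Ssub (x l)" and B': "B' \<in> Ssub (x l)"
  shows "(\<Sum>m<r. (y k m \<bullet> B) * (y k m \<bullet> B')) = (qnorm2 (hinner (x k) (x l)))\<^sup>2 * (B \<bullet> B')"
proof -
  define a where "a = hinner (x k) (x l)"
  obtain w w' where w: "B = outer (x l) w (x l)" "Re_q w = 0"
    and w': "B' = outer (x l) w' (x l)" "Re_q w' = 0"
    using B B' by (auto simp: Ssub_def)
  define C where "C v = outer (x k) (a * v * qcnj a) (x k)" for v
  have C: "C w \<in> Ssub (x k)" "C w' \<in> Ssub (x k)"
    using w(2) w'(2) by (auto simp: C_def Ssub_def Re_q_sandwich)
  have transport: "y k m \<bullet> outer (x l) v (x l) = y k m \<bullet> C v" if "m < r" for m v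
  proof -
    have "y k m \<in> Ssub (x k)"
      using onb \<open>k < n\<close> \<open>m < r\<close> by (simp add: onb_family_def)
    then obtain z where "y k m = outer (x k) z (x k)"
      by (auto simp: Ssub_def)
    then show ?thesis
      using inner_outer_transport[OF \<open>unit_vec (x k)\<close>] by (simp add: C_def a_def)
  qed
  have "(\<Sum>m<r. (y k m \<bullet> B) * (y k m \<bullet> B')) = (\<Sum>m<r. (y k m \<bullet> C w) * (y k m \<bullet> C w'))"
    by (simp add: w w' transport)
  also have "\<dots> = C w \<bullet> C w'"
    using onb_family_parseval[OF onb \<open>k < n\<close> C(1)] by simp
  also have "\<dots> = (qnorm2 a)\<^sup>2 * (w \<bullet> w')"
    by (simp add: C_def inner_outer_unit[OF \<open>unit_vec (x k)\<close>] inner_sandwich)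
  also have "w \<bullet> w' = B \<bullet> B'"
    by (simp add: w w' inner_outer_unit[OF \<open>unit_vec (x l)\<close>])
  finally show ?thesis
    by (simp add: a_def)
qed

lemma inner_proj: "proj x \<bullet> proj y = qnorm2 (hinner x y)"
  by (simp add: proj_def inner_outer mult_qcnj_self)

lemma subspace_family_Ssub:
  "\<forall>k<n. unit_vec (x k) \<Longrightarrow> subspace_family antiherm 3 n (\<lambda>k. Ssub (x k))"
  by (simp add: subspace_family_def subspace_Ssub Ssub_antiherm dim_Ssub)

lemma gram_blk_Ssub:
  assumes "\<forall>k<n. unit_vec (x k)" and onb: "onb_family (\<bullet>) 3 n (\<lambda>k. Ssub (x k)) y"
    and "k < n" "l < n" "i < 3" "j < 3"
  shows "(\<Sum>m<3. gram_blk (\<bullet>) y k l m i * gram_blk (\<bullet>) y k l m j)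
    = (if i = j then (qnorm2 (hinner (x k) (x l)))\<^sup>2 else 0)"
proof -
  have "y l i \<in> Ssub (x l)" "y l j \<in> Ssub (x l)" "y l i \<bullet> y l j = (if i = j then 1 else 0)"
    using onb assms(4-6) by (auto simp: onb_family_def)
  then show ?thesis
    using Ssub_gram_product[OF onb] assms(1,3,4) by (simp add: gram_blk_def)
qed

lemma equi_isoclinic_Ssub:
  assumes unit: "\<forall>k<n. unit_vec (x k)" and "equiangular n x"
  shows "equi_isoclinic antiherm (\<bullet>) 3 n (\<lambda>k. Ssub (x k))"
proof -
  obtain c where c: "\<And>k l. k < n \<Longrightarrow> l < n \<Longrightarrow> k \<noteq> l \<Longrightarrow> qnorm2 (hinner (x k) (x l)) = c"
    using \<open>equiangular n x\<close> unfolding equiangular_def by blast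
  show ?thesis
    unfolding equi_isoclinic_def
  proof (intro conjI subspace_family_Ssub[OF unit] allI impI)
    fix y assume onb: "onb_family (\<bullet>) 3 n (\<lambda>k. Ssub (x k)) y"
    show "\<exists>\<alpha>\<ge>0. \<forall>k<n. \<forall>l<n. k \<noteq> l \<longrightarrow> (\<forall>i<3. \<forall>j<3.
        (\<Sum>m<3. gram_blk (\<bullet>) y k l m i * gram_blk (\<bullet>) y k l m j) = (if i = j then \<alpha> else 0))"
      by (intro exI[of _ "c\<^sup>2"]) (simp add: gram_blk_Ssub[OF unit onb] c)
  qed
qed

lemma tight_fusion_frame_Ssub:
  fixes x :: "nat \<Rightarrow> quat^'d"
  assumes unit: "\<forall>k<n. unit_vec (x k)" and "proj_2design n x"
  shows "tight_fusion_frame antiherm (\<bullet>) 3 n (\<lambda>k. Ssub (x k))"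
  unfolding tight_fusion_frame_def
proof (intro conjI subspace_family_Ssub[OF unit] allI impI)
  fix y assume onb: "onb_family (\<bullet>) 3 n (\<lambda>k. Ssub (x k)) y"
  have frobenius: "(\<Sum>i<3. \<Sum>j<3. (gram_blk (\<bullet>) y k l i j)\<^sup>2) = 3 * (proj (x k) \<bullet> proj (x l))\<^sup>2"
    if "k < n" "l < n" for k l
  proof -
    have "(\<Sum>i<3. \<Sum>j<3. (gram_blk (\<bullet>) y k l i j)\<^sup>2)
        = (\<Sum>j<3. \<Sum>i<3. gram_blk (\<bullet>) y k l i j * gram_blk (\<bullet>) y k l i j)"
      by (subst sum.swap) (simp add: power2_eq_square)
    also have "\<dots> = (\<Sum>j<3::nat. (qnorm2 (hinner (x k) (x l)))\<^sup>2)"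
      by (intro sum.cong refl) (simp add: gram_blk_Ssub[OF unit onb that])
    finally show ?thesis
      by (simp add: inner_proj)
  qed
  have "(1 / (real n)\<^sup>2) * (\<Sum>k<n. \<Sum>l<n. \<Sum>i<3. \<Sum>j<3. (gram_blk (\<bullet>) y k l i j)\<^sup>2)
      = 3 * ((1 / (real n)\<^sup>2) * (\<Sum>k<n. \<Sum>l<n. (proj (x k) \<bullet> proj (x l))\<^sup>2))"
    by (simp add: frobenius sum_distrib_left)
  also have "\<dots> = 3 * (3 / (real CARD('d) * (2 * real CARD('d) + 1)))"
    using \<open>proj_2design n x\<close> by (simp add: proj_2design_def minner_eq_inner)
  also have "\<dots> = (real 3)\<^sup>2 / real (dim (antiherm :: (quat^'d^'d) set))"
    by (simp add: dim_antiherm algebra_simps)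
  finally show "(1 / (real n)\<^sup>2) * (\<Sum>k<n. \<Sum>l<n. \<Sum>i<3. \<Sum>j<3. (gram_blk (\<bullet>) y k l i j)\<^sup>2)
      = (real 3)\<^sup>2 / real (dim (antiherm :: (quat^'d^'d) set))" .
qed

theorem mainTheorem16:
  fixes n :: nat and x :: "nat \<Rightarrow> quat^'d"
  assumes unit: "\<forall>k<n. unit_vec (x k)"
  shows "(equiangular n x \<longrightarrow>
            equi_isoclinic (antiherm :: (quat^'d^'d) set) minner 3 n (\<lambda>k. Ssub (x k)))
       \<and> (proj_2design n x \<longrightarrow>
            tight_fusion_frame (antiherm :: (quat^'d^'d) set) minner 3 n (\<lambda>k. Ssub (x k)))"
  unfolding minner_eq_inner
  using equi_isoclinic_Ssub[OF unit] tight_fusion_frame_Ssub[OF unit] by blast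

end
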